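(* Let $0<q<1$, $I=[0,b)$ with $0<b\le\infty$, and let $u_0:I\to\mathbb{R}$ be continuous with $1+(1-q)yu_0(y)>0$ and $1-(1-q)yu_0(qy)>0$ for all $y\in I$. Put $V_0(x)=\partial_qu_0(x)+u_0(x)u_0(qx)$ and, for $t\in\mathbb{R}$, $$w_t(x)=\frac{t\exp\Big(\frac{1}{1-q}\int_0^x\frac1y\ln\frac{1+(1-q)yu_0(y)}{1-(1-q)yu_0(qy)}d_qy\Big)}{1+t\int_0^x\frac{1}{1+(1-q)yu_0(y)}\exp\Big(\frac{1}{1-q}\int_0^y\frac1s\ln\frac{1+(1-q)su_0(s)}{1-(1-q)su_0(qs)}d_qs\Big)d_qy},\qquad u(t,x)=u_0(x)-w_t(x),$$ assuming the denominator does not vanish on $I$. Then, for $x\in I\setminus\{0\}$, $$-\partial_qu(t,x)+u(t,x)u(t,qx)=-\partial_qu_0(x)+u_0(x)u_0(qx),$$ and $$\partial_qu(t,x)+u(t,x)u(t,qx)=V_0(x)-2\,\partial_qw_t(x).$$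
   Context: $\partial_q f(x)=\dfrac{f(x)-f(qx)}{(1-q)x}$ for $x\neq0$ (applied in the variable $x$); $\int_0^x f(t)\,d_qt=\sum_{n\ge0}(1-q)q^nx\,f(q^nx)$ (Jackson $q$-integral). *)

theory Defs
  imports "HOL-Analysis.Analysis"
begin

text \<open>q-derivative (in the variable x), meaningful for x \<noteq> 0.\<close>
definition qderiv :: "real \<Rightarrow> (real \<Rightarrow> real) \<Rightarrow> real \<Rightarrow> real" where
  "qderiv q f x = (f x - f (q * x)) / ((1 - q) * x)"

definition jackson_qint :: "real \<Rightarrow> (real \<Rightarrow> real) \<Rightarrow> real \<Rightarrow> real" where
  "jackson_qint q f x = (\<Sum>n. (1 - q) * q ^ n * x * f (q ^ n * x))"

definition qexpo :: "real \<Rightarrow> (real \<Rightarrow> real) \<Rightarrow> real \<Rightarrow> real" where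
  "qexpo q u0 x = (1 / (1 - q)) * jackson_qint q
     (\<lambda>y. (1 / y) * ln ((1 + (1 - q) * y * u0 y) / (1 - (1 - q) * y * u0 (q * y)))) x"

definition qdenom :: "real \<Rightarrow> (real \<Rightarrow> real) \<Rightarrow> real \<Rightarrow> real \<Rightarrow> real" where
  "qdenom q u0 t x = 1 + t * jackson_qint q (\<lambda>y. exp (qexpo q u0 y) / (1 + (1 - q) * y * u0 y)) x"

definition wt :: "real \<Rightarrow> (real \<Rightarrow> real) \<Rightarrow> real \<Rightarrow> real \<Rightarrow> real" where
  "wt q u0 t x = t * exp (qexpo q u0 x) / qdenom q u0 t x"

end

theory Submission
  imports Defs
begin

text \<open>Splitting off the first term of each Jackson series gives first-order q-difference equations
  for the two ingredients of \<open>w\<^sub>t = t E / D\<close>: \<open>E(x) = E(qx) P(x) / N(x)\<close> and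
  \<open>D(x) = D(qx) + t (1-q) x E(x) / P(x)\<close>, where \<open>P(x) = 1 + (1-q) x u\<^sub>0(x)\<close> and
  \<open>N(x) = 1 - (1-q) x u\<^sub>0(qx)\<close>. Together they say that \<open>w\<^sub>t\<close> solves the q-Riccati equation
  \<open>\<partial>\<^sub>q w(x) = u\<^sub>0(x) w(qx) + w(x) u\<^sub>0(qx) - w(x) w(qx)\<close>, and both identities follow from it by
  algebra with \<open>u = u\<^sub>0 - w\<^sub>t\<close>. The splitting is legitimate because, by continuity and compactness,
  the integrands are bounded on \<open>(0, x]\<close>, so the Jackson series converge.\<close>

lemma abs_ln_divide_le:
  fixes P N m :: real
  assumes "0 < m" "m \<le> P" "m \<le> N"
  shows "\<bar>ln (P / N)\<bar> \<le> \<bar>P - N\<bar> / m"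
proof -
  have "0 < P" "0 < N" using assms by auto
  have "(P - N) / N \<le> \<bar>P - N\<bar> / m" "(N - P) / P \<le> \<bar>P - N\<bar> / m"
    using assms by (auto intro!: frac_le)
  then show ?thesis
    using ln_diff_le[OF \<open>0 < P\<close> \<open>0 < N\<close>] ln_diff_le[OF \<open>0 < N\<close> \<open>0 < P\<close>] \<open>0 < P\<close> \<open>0 < N\<close>
    by (simp add: ln_div abs_le_iff)
qed

lemma ratio_riccati_step:
  fixes h a c E E' D D' t :: real
  assumes "1 + h * a \<noteq> 0" "D \<noteq> 0" "D' \<noteq> 0"
    and "E * (1 - h * c) = E' * (1 + h * a)"
    and "D = D' + t * h * E / (1 + h * a)"
  shows "t * E / D - t * E' / D'
    = h * (a * (t * E' / D') + (t * E / D) * c - (t * E / D) * (t * E' / D'))"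
proof -
  have "E - E' = h * (a * E' + c * E)"
    using assms(4) by (simp add: algebra_simps)
  moreover have "D * (1 + h * a) = D' * (1 + h * a) + t * h * E"
    using assms(1,5) by (simp add: field_simps)
  ultimately have cross_difference: "E * D' - E' * D = h * (a * E' * D + c * E * D' - t * E * E')"
    by algebra
  have "t * E / D - t * E' / D' = t * (E * D' - E' * D) / (D * D')"
    using assms(2,3) by (simp add: field_simps)
  also have "\<dots> = t * h * (a * E' * D + c * E * D' - t * E * E') / (D * D')"
    unfolding cross_difference by simp
  also have "\<dots> = h * (a * (t * E' / D') + (t * E / D) * c - (t * E / D) * (t * E' / D'))"
    using assms(2,3) by (simp add: field_simps)
  finally show ?thesis .
qed

lemma power_mult_in_Ioc:
  fixes q x :: real
  assumes "0 < q" "q \<le> 1" "0 < x"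
  shows "q ^ n * x \<in> {0<..x}"
  using assms power_le_one[of q n] by (auto intro: mult_left_le_one_le)

lemma abs_jackson_term_le:
  fixes f :: "real \<Rightarrow> real"
  assumes "0 < q" "q < 1" "\<And>n. \<bar>f (q ^ n * x)\<bar> \<le> K"
  shows "\<bar>(1 - q) * q ^ n * x * f (q ^ n * x)\<bar> \<le> (1 - q) * \<bar>x\<bar> * K * q ^ n"
proof -
  have "\<bar>(1 - q) * q ^ n * x * f (q ^ n * x)\<bar> = (1 - q) * q ^ n * \<bar>x\<bar> * \<bar>f (q ^ n * x)\<bar>"
    using assms(1,2) by (simp add: abs_mult power_abs)
  also have "\<dots> \<le> (1 - q) * q ^ n * \<bar>x\<bar> * K"
    using assms by (intro mult_left_mono) auto
  finally show ?thesis by (simp add: algebra_simps)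
qed

lemma jackson_qint_summable:
  fixes f :: "real \<Rightarrow> real"
  assumes "0 < q" "q < 1" "\<And>n. \<bar>f (q ^ n * x)\<bar> \<le> K"
  shows "summable (\<lambda>n. (1 - q) * q ^ n * x * f (q ^ n * x))"
  using assms abs_jackson_term_le[of q f x K, OF assms]
  by (intro summable_comparison_test'[where N = 0, OF summable_mult[OF summable_geometric]]) auto

lemma jackson_qint_unfold:
  fixes f :: "real \<Rightarrow> real"
  assumes "0 < q" "q < 1" "\<And>n. \<bar>f (q ^ n * x)\<bar> \<le> K"
  shows "jackson_qint q f x = (1 - q) * x * f x + jackson_qint q f (q * x)"
  using suminf_split_head[OF jackson_qint_summable[of q f x K, OF assms]]
  by (simp add: jackson_qint_def algebra_simps)

lemma abs_jackson_qint_le: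
  fixes f :: "real \<Rightarrow> real"
  assumes "0 < q" "q < 1" "\<And>n. \<bar>f (q ^ n * x)\<bar> \<le> K"
  shows "\<bar>jackson_qint q f x\<bar> \<le> \<bar>x\<bar> * K"
proof -
  have "\<bar>jackson_qint q f x\<bar> \<le> (\<Sum>n. (1 - q) * \<bar>x\<bar> * K * q ^ n)"
    unfolding jackson_qint_def using assms abs_jackson_term_le[of q f x K, OF assms]
    by (intro norm_suminf_le[where 'a = real, unfolded real_norm_def] summable_mult summable_geometric)
      auto
  also have "\<dots> = \<bar>x\<bar> * K"
    using assms(1,2) by (simp add: suminf_mult suminf_geometric)
  finally show ?thesis .
qed

lemma qderiv_diff:
  "qderiv q (\<lambda>y. f y - g y) x = qderiv q f x - qderiv q g x"
  by (simp add: qderiv_def diff_divide_distrib)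

lemma qderiv_eqI:
  assumes "q \<noteq> 1" "x \<noteq> 0" "f x - f (q * x) = (1 - q) * x * r"
  shows "qderiv q f x = r"
  using assms by (simp add: qderiv_def)

locale qriccati_data =
  fixes q :: real and b :: ereal and u0 :: "real \<Rightarrow> real"
  assumes q_pos: "0 < q" and q_less_one: "q < 1"
    and u0_cont: "continuous_on {y. 0 \<le> y \<and> ereal y < b} u0"
    and factors_pos: "\<forall>y. 0 \<le> y \<and> ereal y < b \<longrightarrow>
                 1 + (1 - q) * y * u0 y > 0 \<and> 1 - (1 - q) * y * u0 (q * y) > 0"
begin

definition P :: "real \<Rightarrow> real" where
  "P y = 1 + (1 - q) * y * u0 y"

definition N :: "real \<Rightarrow> real" where
  "N y = 1 - (1 - q) * y * u0 (q * y)"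

lemma segment_subset: "ereal x < b \<Longrightarrow> {0..x} \<subseteq> {y. 0 \<le> y \<and> ereal y < b}"
  by (auto intro: le_less_trans[of "ereal _" "ereal x" b])

lemma mult_q_in_segment: "y \<in> {0..x} \<Longrightarrow> q * y \<in> {0..x}"
  using q_pos q_less_one mult_left_le_one_le[of y q] by auto

lemma segment_bounds:
  assumes "0 \<le> x" "ereal x < b"
  obtains m M where "0 < m" "\<And>y. y \<in> {0..x} \<Longrightarrow> m \<le> P y \<and> m \<le> N y \<and> \<bar>u0 y\<bar> \<le> M"
proof -
  have cont_u0: "continuous_on {0..x} u0"
    using continuous_on_subset[OF u0_cont segment_subset[OF assms(2)]] .
  moreover have "continuous_on {0..x} (\<lambda>y. u0 (q * y))"
    by (rule continuous_on_compose2[OF cont_u0]) (auto intro!: continuous_intros mult_q_in_segment)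
  ultimately have "continuous_on {0..x} (\<lambda>y. min (P y) (N y))"
    unfolding P_def N_def by (intro continuous_intros)
  then obtain y0 where "y0 \<in> {0..x}"
    and y0_min: "\<And>y. y \<in> {0..x} \<Longrightarrow> min (P y0) (N y0) \<le> min (P y) (N y)"
    using continuous_attains_inf[of "{0..x}"] assms(1) by fastforce
  obtain y1 where y1_max: "\<And>y. y \<in> {0..x} \<Longrightarrow> \<bar>u0 y\<bar> \<le> \<bar>u0 y1\<bar>"
    using continuous_attains_sup[of "{0..x}" "\<lambda>y. \<bar>u0 y\<bar>"] cont_u0 assms(1)
    by (fastforce intro: continuous_intros)
  have "0 < min (P y0) (N y0)"
    using factors_pos segment_subset[OF assms(2)] \<open>y0 \<in> {0..x}\<close> unfolding P_def N_def by auto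
  with y0_min y1_max show ?thesis
    by (intro that[of "min (P y0) (N y0)" "\<bar>u0 y1\<bar>"]) auto
qed

lemma bound_along_orbit:
  assumes "0 < x" "\<And>y. y \<in> {0<..x} \<Longrightarrow> \<bar>f y\<bar> \<le> K"
  shows "\<bar>f (q ^ n * x)\<bar> \<le> K"
proof -
  have "q ^ n * x \<in> {0<..x}"
    using power_mult_in_Ioc q_pos q_less_one assms(1) by simp
  then show ?thesis using assms(2) by blast
qed

lemma qexpo_eq: "qexpo q u0 x = jackson_qint q (\<lambda>y. ln (P y / N y) / y) x / (1 - q)"
  by (simp add: qexpo_def P_def N_def)

lemma qdenom_eq: "qdenom q u0 t x = 1 + t * jackson_qint q (\<lambda>y. exp (qexpo q u0 y) / P y) x"
  by (simp add: qdenom_def P_def)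

lemma qexpo_integrand_bounded:
  assumes "0 \<le> x" "ereal x < b"
  obtains K where "\<And>y. y \<in> {0<..x} \<Longrightarrow> \<bar>ln (P y / N y) / y\<bar> \<le> K"
proof -
  obtain m M where "0 < m"
    and bounds: "\<And>y. y \<in> {0..x} \<Longrightarrow> m \<le> P y \<and> m \<le> N y \<and> \<bar>u0 y\<bar> \<le> M"
    using segment_bounds[OF assms] by blast
  have "\<bar>ln (P y / N y) / y\<bar> \<le> 2 * (1 - q) * M / m" if "y \<in> {0<..x}" for y
  proof -
    have "P y - N y = (1 - q) * y * (u0 y + u0 (q * y))"
      by (simp add: P_def N_def algebra_simps)
    then have "\<bar>P y - N y\<bar> = (1 - q) * y * \<bar>u0 y + u0 (q * y)\<bar>"
      using that q_less_one by (simp add: abs_mult)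
    also have "\<dots> \<le> (1 - q) * y * (2 * M)"
      using that q_less_one bounds[of y] bounds[of "q * y"] mult_q_in_segment[of y x]
      by (intro mult_left_mono) auto
    finally have "\<bar>P y - N y\<bar> / m \<le> (1 - q) * y * (2 * M) / m"
      using \<open>0 < m\<close> by (simp add: divide_right_mono)
    then have "\<bar>ln (P y / N y)\<bar> \<le> (1 - q) * y * (2 * M) / m"
      using abs_ln_divide_le[OF \<open>0 < m\<close>, of "P y" "N y"] bounds[of y] that by auto
    then show ?thesis
      using that by (simp add: abs_divide pos_divide_le_eq mult.commute mult.left_commute)
  qed
  then show ?thesis by (rule that)
qed

lemma qexpo_unfold:
  assumes "0 < x" "ereal x < b"
  shows "qexpo q u0 x = qexpo q u0 (q * x) + ln (P x / N x)"
proof -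
  obtain K where K: "\<And>y. y \<in> {0<..x} \<Longrightarrow> \<bar>ln (P y / N y) / y\<bar> \<le> K"
    using qexpo_integrand_bounded assms less_imp_le by blast
  have "jackson_qint q (\<lambda>y. ln (P y / N y) / y) x
      = (1 - q) * x * (ln (P x / N x) / x)
        + jackson_qint q (\<lambda>y. ln (P y / N y) / y) (q * x)"
    by (rule jackson_qint_unfold[OF q_pos q_less_one bound_along_orbit[OF assms(1) K]])
  then show ?thesis
    using assms(1) q_less_one by (simp add: qexpo_eq add_divide_distrib)
qed

lemma qexpo_bounded:
  assumes "0 \<le> x" "ereal x < b"
  obtains C where "\<And>y. y \<in> {0<..x} \<Longrightarrow> \<bar>qexpo q u0 y\<bar> \<le> C"
proof -
  obtain K where K: "\<And>y. y \<in> {0<..x} \<Longrightarrow> \<bar>ln (P y / N y) / y\<bar> \<le> K"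
    using qexpo_integrand_bounded[OF assms] by blast
  have "\<bar>qexpo q u0 y\<bar> \<le> x * K / (1 - q)" if "y \<in> {0<..x}" for y
  proof -
    have "0 \<le> K" using K[OF that] by linarith
    have K_y: "\<And>z. z \<in> {0<..y} \<Longrightarrow> \<bar>ln (P z / N z) / z\<bar> \<le> K"
      using K that by auto
    have "0 < y" using that by simp
    have "\<bar>jackson_qint q (\<lambda>z. ln (P z / N z) / z) y\<bar> \<le> \<bar>y\<bar> * K"
      by (rule abs_jackson_qint_le[OF q_pos q_less_one bound_along_orbit[OF \<open>0 < y\<close> K_y]])
    also have "\<dots> \<le> x * K"
      using that \<open>0 \<le> K\<close> by (intro mult_right_mono) auto
    finally show ?thesis
      using q_less_one by (simp add: qexpo_eq abs_divide divide_right_mono)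
  qed
  then show ?thesis by (rule that)
qed

lemma qdenom_unfold:
  assumes "0 < x" "ereal x < b"
  shows "qdenom q u0 t x = qdenom q u0 t (q * x) + t * ((1 - q) * x) * exp (qexpo q u0 x) / P x"
proof -
  obtain m M where "0 < m" and m: "\<And>y. y \<in> {0..x} \<Longrightarrow> m \<le> P y"
    using segment_bounds assms less_imp_le by metis
  obtain C where C: "\<And>y. y \<in> {0<..x} \<Longrightarrow> \<bar>qexpo q u0 y\<bar> \<le> C"
    using qexpo_bounded assms less_imp_le by metis
  have integrand_bound: "\<bar>exp (qexpo q u0 y) / P y\<bar> \<le> exp C / m" if "y \<in> {0<..x}" for y
  proof -
    have "m \<le> P y" using m that by auto
    moreover have "exp (qexpo q u0 y) \<le> exp C" using C[OF that] by simp
    ultimately show ?thesis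
      using \<open>0 < m\<close> by (simp add: frac_le)
  qed
  have "jackson_qint q (\<lambda>y. exp (qexpo q u0 y) / P y) x
      = (1 - q) * x * (exp (qexpo q u0 x) / P x)
        + jackson_qint q (\<lambda>y. exp (qexpo q u0 y) / P y) (q * x)"
    using bound_along_orbit[OF assms(1) integrand_bound]
    by (rule jackson_qint_unfold[OF q_pos q_less_one])
  then show ?thesis
    by (simp add: qdenom_eq algebra_simps)
qed

lemma qderiv_wt_riccati:
  assumes "0 < x" "ereal x < b" "qdenom q u0 t x \<noteq> 0" "qdenom q u0 t (q * x) \<noteq> 0"
  shows "qderiv q (wt q u0 t) x
    = u0 x * wt q u0 t (q * x) + wt q u0 t x * u0 (q * x) - wt q u0 t x * wt q u0 t (q * x)"
proof (rule qderiv_eqI)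
  have "0 < P x" "0 < N x"
    using factors_pos assms(1,2) unfolding P_def N_def by auto
  then have "exp (qexpo q u0 x) * N x = exp (qexpo q u0 (q * x)) * P x"
    using qexpo_unfold[OF assms(1,2)] by (simp add: exp_add)
  then show "wt q u0 t x - wt q u0 t (q * x) = (1 - q) * x *
      (u0 x * wt q u0 t (q * x) + wt q u0 t x * u0 (q * x) - wt q u0 t x * wt q u0 t (q * x))"
    unfolding wt_def
    using ratio_riccati_step[OF _ assms(3,4) _ qdenom_unfold[OF assms(1,2), unfolded P_def]]
      \<open>0 < P x\<close>
    by (simp add: P_def N_def)
qed (use assms(1) q_less_one in auto)

end

theorem mainTheorem8:
  fixes q t x :: real and b :: ereal and u0 :: "real \<Rightarrow> real"
  assumes q0: "0 < q" and q1: "q < 1" and b0: "0 < b"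
    and cont: "continuous_on {y. 0 \<le> y \<and> ereal y < b} u0"
    and pos: "\<forall>y. 0 \<le> y \<and> ereal y < b \<longrightarrow>
                 1 + (1 - q) * y * u0 y > 0 \<and> 1 - (1 - q) * y * u0 (q * y) > 0"
    and nz: "\<forall>y. 0 \<le> y \<and> ereal y < b \<longrightarrow> qdenom q u0 t y \<noteq> 0"
    and x0: "0 < x" and xb: "ereal x < b"
  shows "- qderiv q (\<lambda>y. u0 y - wt q u0 t y) x
           + (u0 x - wt q u0 t x) * (u0 (q * x) - wt q u0 t (q * x))
         = - qderiv q u0 x + u0 x * u0 (q * x)
       \<and> qderiv q (\<lambda>y. u0 y - wt q u0 t y) x
           + (u0 x - wt q u0 t x) * (u0 (q * x) - wt q u0 t (q * x))
         = (qderiv q u0 x + u0 x * u0 (q * x)) - 2 * qderiv q (wt q u0 t) x"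
proof -
  interpret qriccati_data q b u0
    using q0 q1 cont pos by unfold_locales
  have "x \<in> {0..x}" "q * x \<in> {0..x}"
    using x0 mult_q_in_segment[of x x] by auto
  then have "qdenom q u0 t x \<noteq> 0" "qdenom q u0 t (q * x) \<noteq> 0"
    using nz segment_subset[OF xb] by blast+
  then have "qderiv q (wt q u0 t) x
      = u0 x * wt q u0 t (q * x) + wt q u0 t x * u0 (q * x) - wt q u0 t x * wt q u0 t (q * x)"
    using qderiv_wt_riccati[OF x0 xb] by blast
  then show ?thesis
    by (simp add: qderiv_diff algebra_simps)
qed

end
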